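(* Let $n\ge1$, $p$ a prime, $R\subset E_n$, and $S\subset E_n$ with $|S|\geq2$. The following are equivalent: (i) $\mathcal{C}_{R,S}=\mathcal{C}_{\mathsf{pHa},S}$; (ii) $\mathcal{C}_{\mathsf{pHa},S}$ is a homogeneous $S$-adapted $p$-cone, i.e. there is $T\subset E_n$ with $\mathcal{C}_{\mathsf{pHa},S}=\{x\in\mathbb{Z}^n:F^{(i)}_T(x)\le0\ \forall i\in S\}$; (iii) for every connected component $C$ of the chain diagram $\Gamma_n(R,S)$, the integers $\#(C\cap R)$ and $\#C$ have different parity.
   Context: $E_n=\{1,\dots,n\}$, indices mod $n$; $e_i$ standard basis of $\mathbb{Z}^n$ ($e_0=e_n$). For $U\subset E_n$, $\delta_U^{(i)}=-1$ if $i\in U$, else $1$. $F^{(d)}_T(x)=\sum_{i=0}^{n-1}p^i\delta_T^{(d+i)}x_{d+i}$. Saturation of a submonoid $A\subset\mathbb{Z}^n$: $\{x:mx\in A\text{ for some }m\ge1\}$. $\mathsf{ha}^{(i)}_{R,S}=-\delta_S^{(i)}e_i-p\delta_R^{(i-1)}e_{i-1}$; $\mathcal{C}_{\mathsf{pHa},S}$ is the saturation of $\sum_{i\in S}\mathbb{N}\mathsf{ha}^{(i)}_{R,S}+\sum_{i\notin S}\mathbb{Z}\mathsf{ha}^{(i)}_{R,S}$. $\mathcal{C}_{R,S}=\{x:F^{(i)}_{T'}(x)\le0\ \forall i\in S\}$ where $T'$ is the unique subset with: for each $i$ with $i+1\notin S$, if $i\notin R$ exactly one of $i,i+1$ is in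 $T'$, and if $i\in R$ both or neither are; and for each $i\in S$, $i-1\in T'\iff i-1\in R$. The chain diagram $\Gamma_n(R,S)$ has vertices $E_n$, with $i$ and $i+1$ joined by an edge exactly when $i+1\notin S$; its connected components are the maximal sets connected by edges, namely the cyclic intervals from an element $s\in S$ to (the next element of $S$ after $s$) minus one. *)

theory Defs
  imports "HOL-Computational_Algebra.Primes"
begin

(* Vectors of Z^n are functions nat => int supported on E_n = {1..n}. *)
definition En :: "nat \<Rightarrow> nat set" where "En n = {1..n}"

definition zvec :: "nat \<Rightarrow> (nat \<Rightarrow> int) set" where
  "zvec n = {x. \<forall>j. j \<notin> En n \<longrightarrow> x j = 0}"

(* cyclic index: representative in {1..n} of k mod n *)
definition cidx :: "nat \<Rightarrow> nat \<Rightarrow> nat" where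
  "cidx n k = (k + n - 1) mod n + 1"

definition csucc :: "nat \<Rightarrow> nat \<Rightarrow> nat" where "csucc n i = cidx n (i + 1)"
definition cpred :: "nat \<Rightarrow> nat \<Rightarrow> nat" where "cpred n i = cidx n (i + n - 1)"

definition evec :: "nat \<Rightarrow> nat \<Rightarrow> nat \<Rightarrow> int" where
  "evec n i = (\<lambda>j. if j = cidx n i then 1 else 0)"

definition delta :: "nat \<Rightarrow> nat set \<Rightarrow> nat \<Rightarrow> int" where
  "delta n U i = (if cidx n i \<in> U then -1 else 1)"

definition F :: "nat \<Rightarrow> nat \<Rightarrow> nat \<Rightarrow> nat set \<Rightarrow> (nat \<Rightarrow> int) \<Rightarrow> int" where
  "F n p d T x = (\<Sum>i<n. int p ^ i * delta n T (d + i) * x (cidx n (d + i)))"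

definition ha :: "nat \<Rightarrow> nat \<Rightarrow> nat set \<Rightarrow> nat set \<Rightarrow> nat \<Rightarrow> nat \<Rightarrow> int" where
  "ha n p R S i = (\<lambda>j. - delta n S i * evec n i j
                        - int p * delta n R (cpred n i) * evec n (cpred n i) j)"

definition saturation :: "nat \<Rightarrow> (nat \<Rightarrow> int) set \<Rightarrow> (nat \<Rightarrow> int) set" where
  "saturation n A = {x \<in> zvec n. \<exists>m::nat. m \<ge> 1 \<and> (\<lambda>j. int m * x j) \<in> A}"

definition pHa_monoid :: "nat \<Rightarrow> nat \<Rightarrow> nat set \<Rightarrow> nat set \<Rightarrow> (nat \<Rightarrow> int) set" where
  "pHa_monoid n p R S = {x. \<exists>c :: nat \<Rightarrow> int. (\<forall>i\<in>S. c i \<ge> 0) \<and>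
       x = (\<lambda>j. \<Sum>i\<in>En n. c i * ha n p R S i j)}"

definition C_pHa :: "nat \<Rightarrow> nat \<Rightarrow> nat set \<Rightarrow> nat set \<Rightarrow> (nat \<Rightarrow> int) set" where
  "C_pHa n p R S = saturation n (pHa_monoid n p R S)"

definition Tprime_cond :: "nat \<Rightarrow> nat set \<Rightarrow> nat set \<Rightarrow> nat set \<Rightarrow> bool" where
  "Tprime_cond n R S T \<longleftrightarrow> T \<subseteq> En n \<and>
     (\<forall>i\<in>En n. csucc n i \<notin> S \<longrightarrow>
         (i \<notin> R \<longrightarrow> (i \<in> T \<longleftrightarrow> csucc n i \<notin> T)) \<and>
         (i \<in> R \<longrightarrow> (i \<in> T \<longleftrightarrow> csucc n i \<in> T))) \<and>
     (\<forall>i\<in>S. cpred n i \<in> T \<longleftrightarrow> cpred n i \<in> R)"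

definition Tprime :: "nat \<Rightarrow> nat set \<Rightarrow> nat set \<Rightarrow> nat set" where
  "Tprime n R S = (THE T. Tprime_cond n R S T)"

definition hom_cone :: "nat \<Rightarrow> nat \<Rightarrow> nat set \<Rightarrow> nat set \<Rightarrow> (nat \<Rightarrow> int) set" where
  "hom_cone n p S T = {x \<in> zvec n. \<forall>i\<in>S. F n p i T x \<le> 0}"

definition C_RS :: "nat \<Rightarrow> nat \<Rightarrow> nat set \<Rightarrow> nat set \<Rightarrow> (nat \<Rightarrow> int) set" where
  "C_RS n p R S = hom_cone n p S (Tprime n R S)"

definition chain_edges :: "nat \<Rightarrow> nat set \<Rightarrow> (nat \<times> nat) set" where
  "chain_edges n S = {(i, csucc n i) | i. i \<in> En n \<and> csucc n i \<notin> S}"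

definition chain_components :: "nat \<Rightarrow> nat set \<Rightarrow> nat set set" where
  "chain_components n S =
     (\<lambda>i. ((chain_edges n S \<union> (chain_edges n S)\<inverse>)\<^sup>*) `` {i}) ` En n"

end

theory Submission
  imports Defs "HOL-Number_Theory.Cong"
begin

text \<open>
  Write lattice vectors as \<open>x = \<Sum>\<^sub>i c\<^sub>i ha\<^sub>i\<close>: for \<open>p \<ge> 2\<close> the \<open>ha\<^sub>i\<close> are linearly
  independent and every lattice vector has a positive multiple of this form. In these coordinates
  \<open>C_pHa\<close> is the orthant \<open>c\<^sub>i \<ge> 0 (i \<in> S)\<close> and \<open>hom_cone T\<close> is cut out by the rows
  \<open>d \<in> S\<close> of the matrix \<open>F n p d T (ha n p R S k)\<close>, so the two cones agree iff these rows are
  diagonal with negative diagonal entry. Off the diagonal the entry is a power of \<open>p\<close> times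
  \<open>\<delta>\<^sub>S(k)\<delta>\<^sub>T(k) + \<delta>\<^sub>R(k-1)\<delta>\<^sub>T(k-1)\<close>, and since \<open>p\<^sup>n \<ge> 2\<close> the diagonal entry has the sign
  of \<open>-\<delta>\<^sub>R(d-1)\<delta>\<^sub>T(d-1)\<close>. As \<open>|S| \<ge> 2\<close>, every \<open>k\<close> lies off the diagonal of some row, and
  the cones agree iff \<open>T\<close> satisfies the recursion defining \<open>T'\<close> and misses \<open>S\<close>.
  Solving the recursion backwards from \<open>s \<in> S\<close> along its component \<open>C\<close> shows
  \<open>s \<notin> T'\<close> iff \<open>\<Prod>\<^sub>j\<^sub>\<in>\<^sub>C (-\<delta>\<^sub>R(j)) = (-1)\<^bsup>#(C - R)\<^esup>\<close> equals \<open>-1\<close>, which is the parity condition.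
\<close>

section \<open>Integer matrices defining an orthant\<close>

lemma orthant_cone_off_diagonal_eq_0:
  fixes W :: "'a \<Rightarrow> 'a \<Rightarrow> int"
  assumes "finite S"
    and nonpos: "\<And>e k. e \<in> S \<Longrightarrow> k \<in> S \<Longrightarrow> W e k \<le> 0"
    and diag: "\<And>e. e \<in> S \<Longrightarrow> W e e < 0"
    and cone: "\<And>c. \<forall>e\<in>S. (\<Sum>k\<in>S. c k * W e k) \<le> 0 \<Longrightarrow> \<forall>k\<in>S. 0 \<le> c k"
    and d: "d \<in> S" and j: "j \<in> S" "j \<noteq> d"
  shows "W d j = 0"
proof (rule ccontr)
  assume "W d j \<noteq> 0"
  then have "W d j < 0" using nonpos[OF d j(1)] by simp
  text \<open>A large weight on the rest of \<open>S\<close> forces every row below zero although \<open>c d = -1\<close>.\<close>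
  define M where "M = 1 + (\<Sum>e\<in>S. \<bar>W e d\<bar>)"
  define c where "c k = (if k = d then -1 else if k \<in> S then M else 0)" for k
  have "(\<Sum>k\<in>S. c k * W e k) \<le> 0" if e: "e \<in> S" for e
  proof -
    have split: "(\<Sum>k\<in>S. c k * W e k) = - W e d + M * (\<Sum>k\<in>S - {d}. W e k)"
      using d \<open>finite S\<close> by (simp add: sum.remove c_def sum_distrib_left)
    define q where "q = (if e = d then j else e)"
    have q: "q \<in> S - {d}" "W e q < 0" using e j \<open>W d j < 0\<close> diag[OF e] by (auto simp: q_def)
    have "(\<Sum>k\<in>S - {d}. W e k) = W e q + (\<Sum>k\<in>S - {d} - {q}. W e k)"
      using q(1) \<open>finite S\<close> by (simp add: sum.remove)
    also have "(\<Sum>k\<in>S - {d} - {q}. W e k) \<le> 0" using nonpos[OF e] by (intro sum_nonpos) auto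
    finally have "(\<Sum>k\<in>S - {d}. W e k) \<le> -1" using q(2) by linarith
    moreover have "0 \<le> M" unfolding M_def by (simp add: sum_nonneg add_nonneg_nonneg)
    ultimately have "M * (\<Sum>k\<in>S - {d}. W e k) \<le> M * (-1)" by (intro mult_left_mono)
    moreover have "\<bar>W e d\<bar> \<le> M - 1"
      unfolding M_def using \<open>finite S\<close> e by (simp add: member_le_sum[of e S "\<lambda>e. \<bar>W e d\<bar>"])
    ultimately show ?thesis unfolding split using abs_ge_minus_self[of "W e d"] by linarith
  qed
  then have "0 \<le> c d" using cone d by blast
  then show False by (simp add: c_def)
qed

lemma orthant_cone_iff_negative_diagonal:
  fixes W :: "'a \<Rightarrow> 'a \<Rightarrow> int"
  assumes "finite I" and "S \<subseteq> I" and diag: "\<And>d. d \<in> S \<Longrightarrow> W d d \<noteq> 0"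
  shows "(\<forall>c. (\<forall>d\<in>S. (\<Sum>k\<in>I. c k * W d k) \<le> 0) \<longleftrightarrow> (\<forall>k\<in>S. 0 \<le> c k)) \<longleftrightarrow>
         (\<forall>d\<in>S. W d d < 0 \<and> (\<forall>k\<in>I. k \<noteq> d \<longrightarrow> W d k = 0))"
proof
  assume cone: "\<forall>c. (\<forall>d\<in>S. (\<Sum>k\<in>I. c k * W d k) \<le> 0) \<longleftrightarrow> (\<forall>k\<in>S. 0 \<le> c k)"
  define unit :: "'a \<Rightarrow> int \<Rightarrow> 'a \<Rightarrow> int" where "unit i s k = (if k = i then s else 0)" for i s k
  have sum_unit: "(\<Sum>k\<in>I. unit i s k * W d k) = s * W d i" if "i \<in> I" for i s d
  proof -
    have "(\<Sum>k\<in>I. unit i s k * W d k) = (\<Sum>k\<in>I. if k = i then s * W d i else 0)"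
      by (intro sum.cong) (auto simp: unit_def)
    then show ?thesis using that \<open>finite I\<close> by simp
  qed
  have nonpos: "W d i \<le> 0" if "d \<in> S" "i \<in> I" for d i
    using cone[rule_format, of "unit i 1"] sum_unit[of i 1] that by (auto simp: unit_def)
  have outside: "W d i = 0" if "d \<in> S" "i \<in> I - S" for d i
    using cone[rule_format, of "unit i (-1)"] sum_unit[of i "-1"] nonpos[of d i] that
    by (auto simp: unit_def)
  have neg: "W d d < 0" if "d \<in> S" for d
    using nonpos[OF that] diag[OF that] \<open>S \<subseteq> I\<close> that by force
  have "W d k = 0" if "d \<in> S" "k \<in> S" "k \<noteq> d" for d k
  proof (rule orthant_cone_off_diagonal_eq_0[OF _ _ neg _ that])
    show "finite S" using \<open>finite I\<close> \<open>S \<subseteq> I\<close> by (rule finite_subset[rotated])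
    show "W e k \<le> 0" if "e \<in> S" "k \<in> S" for e k using nonpos that \<open>S \<subseteq> I\<close> by blast
    fix c assume "\<forall>e\<in>S. (\<Sum>k\<in>S. c k * W e k) \<le> 0"
    moreover have "(\<Sum>k\<in>I. (if k \<in> S then c k else 0) * W e k) = (\<Sum>k\<in>S. c k * W e k)" for e
    proof -
      have "(\<Sum>k\<in>I. (if k \<in> S then c k else 0) * W e k) = (\<Sum>k\<in>I. if k \<in> S then c k * W e k else 0)"
        by (intro sum.cong) auto
      also have "\<dots> = (\<Sum>k\<in>I \<inter> S. c k * W e k)" using \<open>finite I\<close> by (rule sum.inter_restrict[symmetric])
      finally show ?thesis using \<open>S \<subseteq> I\<close> by (simp add: Int_absorb1)
    qed
    ultimately show "\<forall>k\<in>S. 0 \<le> c k" using cone[rule_format, of "\<lambda>k. if k \<in> S then c k else 0"] by auto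
  qed
  then show "\<forall>d\<in>S. W d d < 0 \<and> (\<forall>k\<in>I. k \<noteq> d \<longrightarrow> W d k = 0)"
    using neg outside by blast
next
  assume diagonal: "\<forall>d\<in>S. W d d < 0 \<and> (\<forall>k\<in>I. k \<noteq> d \<longrightarrow> W d k = 0)"
  have "(\<Sum>k\<in>I. c k * W d k) \<le> 0 \<longleftrightarrow> 0 \<le> c d" if "d \<in> S" for c d
  proof -
    have "(\<Sum>k\<in>I. c k * W d k) = c d * W d d"
      using diagonal that \<open>S \<subseteq> I\<close> \<open>finite I\<close> by (subst sum.remove[of _ d]) auto
    moreover have "W d d < 0" using diagonal that by blast
    ultimately show ?thesis by (simp add: mult_le_0_iff)
  qed
  then show "\<forall>c. (\<forall>d\<in>S. (\<Sum>k\<in>I. c k * W d k) \<le> 0) \<longleftrightarrow> (\<forall>k\<in>S. 0 \<le> c k)"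
    by blast
qed

section \<open>Cyclic indices\<close>

locale cyclic =
  fixes n :: nat
  assumes n_pos: "1 \<le> n"
begin

lemma finite_En [simp]: "finite (En n)"
  by (simp add: En_def)

lemma cidx_in_En [simp]: "cidx n k \<in> En n"
proof -
  have "(k + n - 1) mod n < n" using n_pos by simp
  then show ?thesis by (simp add: cidx_def En_def)
qed

lemma cidx_id: "k \<in> En n \<Longrightarrow> cidx n k = k"
proof -
  assume "k \<in> En n"
  then have "k - 1 < n" "1 \<le> k" by (auto simp: En_def)
  then have "(k + n - 1) mod n = k - 1"
    by (metis Nat.add_diff_assoc2 mod_add_self2 mod_less)
  then show ?thesis using \<open>1 \<le> k\<close> unfolding cidx_def by simp
qed

lemma cidx_mod: "cidx n a mod n = a mod n"
proof -
  have "cidx n a mod n = ((a + n - 1) mod n + 1) mod n" by (simp add: cidx_def)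
  also have "\<dots> = (a + n - 1 + 1) mod n" by (metis mod_add_left_eq)
  also have "a + n - 1 + 1 = a + n" using n_pos by simp
  finally show ?thesis by simp
qed

lemma cidx_eq_iff: "cidx n a = cidx n b \<longleftrightarrow> a mod n = b mod n"
proof
  assume "a mod n = b mod n"
  then have "(a + (n - 1)) mod n = (b + (n - 1)) mod n" by (metis mod_add_left_eq)
  moreover have "a + n - 1 = a + (n - 1)" "b + n - 1 = b + (n - 1)" using n_pos by auto
  ultimately show "cidx n a = cidx n b" by (simp add: cidx_def)
qed (metis cidx_mod)

lemma cidx_eqI: "k \<in> En n \<Longrightarrow> a mod n = k mod n \<Longrightarrow> cidx n a = k"
  by (metis cidx_eq_iff cidx_id)

lemma csucc_in_En [simp]: "csucc n i \<in> En n" and cpred_in_En [simp]: "cpred n i \<in> En n"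
  by (simp_all add: csucc_def cpred_def)

lemma csucc_cpred [simp]: "i \<in> En n \<Longrightarrow> csucc n (cpred n i) = i"
proof -
  assume i: "i \<in> En n"
  have "(cpred n i + 1) mod n = (i + n - 1 + 1) mod n"
    by (metis cidx_mod cpred_def mod_add_left_eq)
  also have "i + n - 1 + 1 = i + n" using n_pos by simp
  finally show ?thesis unfolding csucc_def using i by (intro cidx_eqI) auto
qed

lemma cpred_csucc [simp]: "i \<in> En n \<Longrightarrow> cpred n (csucc n i) = i"
proof -
  assume i: "i \<in> En n"
  have "(csucc n i + n - 1) mod n = (csucc n i + (n - 1)) mod n" using n_pos by simp
  also have "\<dots> = (i + 1 + (n - 1)) mod n"
    by (metis cidx_mod csucc_def mod_add_left_eq)
  also have "i + 1 + (n - 1) = i + n" using n_pos by simp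
  finally show ?thesis unfolding cpred_def using i by (intro cidx_eqI) auto
qed

lemma funpow_csucc: "i \<in> En n \<Longrightarrow> (csucc n ^^ k) i = cidx n (i + k)"
proof (induction k)
  case 0
  then show ?case by (simp add: cidx_id)
next
  case (Suc k)
  have "(csucc n ^^ Suc k) i = csucc n (cidx n (i + k))"
    using Suc by (simp only: funpow.simps o_apply)
  also have "\<dots> = cidx n (cidx n (i + k) + 1)"
    by (simp only: csucc_def)
  also have "\<dots> = cidx n (i + Suc k)"
  proof -
    have "(cidx n (i + k) + 1) mod n = (i + k + 1) mod n" by (metis cidx_mod mod_add_left_eq)
    then show ?thesis unfolding cidx_eq_iff by simp
  qed
  finally show ?case .
qed

lemma funpow_csucc_in_En [simp]: "i \<in> En n \<Longrightarrow> (csucc n ^^ k) i \<in> En n"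
  by (simp add: funpow_csucc)

lemma funpow_csucc_reaches:
  assumes i: "i \<in> En n" and j: "j \<in> En n"
  obtains b where "b < n" and "(csucc n ^^ Suc b) i = j"
proof
  have iE: "1 \<le> i" "i \<le> n" and jE: "1 \<le> j" "j \<le> n" using i j by (auto simp: En_def)
  define b where "b = (j + n - i - 1) mod n"
  show "b < n" using n_pos by (simp add: b_def)
  have "(i + Suc b) mod n = (i + 1 + (j + n - i - 1)) mod n"
    unfolding b_def by (metis add_Suc_right add.assoc plus_1_eq_Suc mod_add_right_eq)
  also have "i + 1 + (j + n - i - 1) = j + n" using iE jE by simp
  finally have "cidx n (i + Suc b) = j" using cidx_eqI[OF j] by simp
  then show "(csucc n ^^ Suc b) i = j" by (simp only: funpow_csucc[OF i])
qed

lemma delta_cidx [simp]: "delta n U (cidx n i) = delta n U i"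
  by (simp add: delta_def cidx_id)

lemma delta_cases: "delta n U i = 1 \<or> delta n U i = -1"
  by (simp add: delta_def)

lemma delta_mult_self [simp]: "delta n U i * delta n U i = 1"
  by (simp add: delta_def)

lemma abs_delta [simp]: "\<bar>delta n U i\<bar> = 1"
  by (simp add: delta_def)

lemma delta_En: "i \<in> En n \<Longrightarrow> delta n U i = (if i \<in> U then -1 else 1)"
  by (simp add: delta_def cidx_id)

end

definition cyc_offset :: "nat \<Rightarrow> nat \<Rightarrow> nat \<Rightarrow> nat" where
  "cyc_offset n d k = (k + n - d) mod n"

context cyclic
begin

lemma cyc_offset_lt: "cyc_offset n d k < n"
  using n_pos by (simp add: cyc_offset_def)

lemma cyc_offset_self [simp]: "cyc_offset n d d = 0"
  by (simp add: cyc_offset_def)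

lemma cidx_add_eq_iff:
  assumes d: "d \<in> En n" and k: "k \<in> En n" and t: "t < n"
  shows "cidx n (d + t) = k \<longleftrightarrow> t = cyc_offset n d k"
proof -
  have dn: "d \<le> n" using d by (simp add: En_def)
  have "cidx n (d + t) = k \<longleftrightarrow> (d + t) mod n = k mod n"
    using k by (metis cidx_eq_iff cidx_id)
  also have "\<dots> \<longleftrightarrow> (d + t + (n - d)) mod n = (k + (n - d)) mod n"
    using cong_add_rcancel_nat[of "d + t" "n - d" k n] by (simp add: cong_def)
  also have "d + t + (n - d) = t + n" using dn by simp
  also have "(t + n) mod n = t" using t by simp
  also have "k + (n - d) = k + n - d" using dn by simp
  finally show ?thesis by (simp add: cyc_offset_def)
qed

lemma cyc_offset_cpred_self:
  assumes d: "d \<in> En n"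
  shows "cyc_offset n d (cpred n d) = n - 1"
proof -
  have dn: "d \<le> n" using d by (simp add: En_def)
  have "cyc_offset n d (cpred n d) = (cpred n d + (n - d)) mod n"
    using dn by (simp add: cyc_offset_def)
  also have "\<dots> = (d + n - 1 + (n - d)) mod n"
    by (metis cidx_mod cpred_def mod_add_left_eq)
  also have "d + n - 1 + (n - d) = (n - 1) + n" using dn n_pos by simp
  also have "((n - 1) + n) mod n = n - 1" using n_pos by (subst mod_add_self2) simp
  finally show ?thesis .
qed

lemma Suc_cyc_offset_cpred:
  assumes d: "d \<in> En n" and k: "k \<in> En n" and "k \<noteq> d"
  shows "Suc (cyc_offset n d (cpred n k)) = cyc_offset n d k"
proof -
  have dn: "d \<le> n" using d by (simp add: En_def)
  define t where "t = cyc_offset n d k"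
  have t_eq: "t = (k + (n - d)) mod n" using dn by (simp add: t_def cyc_offset_def)
  have "t \<noteq> 0"
  proof
    assume "t = 0"
    then have "cidx n (d + 0) = k" using t_def cidx_add_eq_iff[OF d k, of 0] n_pos by simp
    then show False using \<open>t = 0\<close> \<open>k \<noteq> d\<close> d by (simp add: cidx_id)
  qed
  have "cyc_offset n d (cpred n k) = (cpred n k + (n - d)) mod n"
    using dn by (simp add: cyc_offset_def)
  also have "\<dots> = (k + n - 1 + (n - d)) mod n"
    by (metis cidx_mod cpred_def mod_add_left_eq)
  also have "k + n - 1 + (n - d) = (k + (n - d)) + (n - 1)" using n_pos by simp
  also have "((k + (n - d)) + (n - 1)) mod n = (t + (n - 1)) mod n"
    by (metis t_eq mod_add_left_eq)
  also have "t + (n - 1) = (t - 1) + n" using \<open>t \<noteq> 0\<close> n_pos by simp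
  also have "((t - 1) + n) mod n = t - 1" using cyc_offset_lt[of d k] t_def by simp
  finally show ?thesis using \<open>t \<noteq> 0\<close> t_def by simp
qed

lemma sum_cidx_add_eq:
  assumes "d \<in> En n" and "k \<in> En n"
  shows "(\<Sum>t<n. if cidx n (d + t) = k then f t else 0) = f (cyc_offset n d k)"
proof -
  have "(\<Sum>t<n. if cidx n (d + t) = k then f t else 0) =
      (\<Sum>t<n. if t = cyc_offset n d k then f t else 0)"
    using cidx_add_eq_iff[OF assms] by (intro sum.cong) auto
  then show ?thesis using cyc_offset_lt by simp
qed

lemma ha_apply:
  "i \<in> En n \<Longrightarrow> ha n p R S i j =
     - delta n S i * (if j = i then 1 else 0)
     - int p * delta n R (cpred n i) * (if j = cpred n i then 1 else 0)"
  by (simp add: ha_def evec_def cidx_id)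

lemma F_ha:
  assumes d: "d \<in> En n" and k: "k \<in> En n"
  shows "F n p d T (ha n p R S k) =
     - delta n S k * int p ^ cyc_offset n d k * delta n T k
     - int p * delta n R (cpred n k) * int p ^ cyc_offset n d (cpred n k) * delta n T (cpred n k)"
proof -
  let ?k' = "cpred n k"
  have "F n p d T (ha n p R S k) =
      (\<Sum>t<n. if cidx n (d + t) = k then - delta n S k * int p ^ t * delta n T k else 0)
    + (\<Sum>t<n. if cidx n (d + t) = ?k' then - int p * delta n R ?k' * int p ^ t * delta n T ?k' else 0)"
    unfolding F_def sum.distrib[symmetric]
  proof (rule sum.cong[OF refl])
    fix t
    have "delta n T (d + t) = delta n T (cidx n (d + t))" by simp
    then show "int p ^ t * delta n T (d + t) * ha n p R S k (cidx n (d + t)) =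
      (if cidx n (d + t) = k then - delta n S k * int p ^ t * delta n T k else 0) +
      (if cidx n (d + t) = ?k' then - int p * delta n R ?k' * int p ^ t * delta n T ?k' else 0)"
      using k by (cases "cidx n (d + t) = k"; cases "cidx n (d + t) = ?k'")
        (simp_all del: delta_cidx add: ha_apply algebra_simps)
  qed
  then show ?thesis using d k by (simp add: sum_cidx_add_eq)
qed

lemma F_ha_off_diagonal:
  assumes "d \<in> En n" and "k \<in> En n" and "k \<noteq> d"
  shows "F n p d T (ha n p R S k) = - (int p ^ cyc_offset n d k) *
     (delta n S k * delta n T k + delta n R (cpred n k) * delta n T (cpred n k))"
proof -
  have "int p ^ cyc_offset n d k = int p * int p ^ cyc_offset n d (cpred n k)"
    using Suc_cyc_offset_cpred[OF assms] by (metis power_Suc)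
  then show ?thesis using F_ha[OF assms(1,2), of p T R S] by (simp add: algebra_simps)
qed

lemma F_ha_diagonal:
  assumes d: "d \<in> En n"
  shows "F n p d T (ha n p R S d) = - delta n S d * delta n T d
     - int p ^ n * (delta n R (cpred n d) * delta n T (cpred n d))"
proof -
  have "int p ^ n = int p * int p ^ (n - 1)"
    using n_pos by (metis Suc_diff_le diff_Suc_1 power_Suc)
  then show ?thesis using F_ha[OF d d, of p T R S] cyc_offset_cpred_self[OF d] by (simp add: algebra_simps)
qed

end

section \<open>Coordinates with respect to the vectors \<open>ha\<close>\<close>

definition ha_comb :: "nat \<Rightarrow> nat \<Rightarrow> nat set \<Rightarrow> nat set \<Rightarrow> (nat \<Rightarrow> int) \<Rightarrow> nat \<Rightarrow> int" where
  "ha_comb n p R S c = (\<lambda>j. \<Sum>i\<in>En n. c i * ha n p R S i j)"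

context cyclic
begin

lemma ha_outside: "j \<notin> En n \<Longrightarrow> ha n p R S i j = 0"
  using cidx_in_En[of i] cidx_in_En[of "cpred n i"] by (auto simp: ha_def evec_def)

lemma ha_comb_in_zvec: "ha_comb n p R S c \<in> zvec n"
  by (simp add: zvec_def ha_comb_def ha_outside)

lemma ha_comb_apply:
  assumes j: "j \<in> En n"
  shows "ha_comb n p R S c j = - delta n S j * c j - int p * delta n R j * c (csucc n j)"
proof -
  have "ha_comb n p R S c j =
      (\<Sum>i\<in>En n. if i = j then - delta n S j * c j else 0)
    + (\<Sum>i\<in>En n. if i = csucc n j then - int p * delta n R j * c (csucc n j) else 0)"
    unfolding ha_comb_def sum.distrib[symmetric]
  proof (rule sum.cong[OF refl])
    fix i assume i: "i \<in> En n"
    have "j = cpred n i \<longleftrightarrow> i = csucc n j" using i j by auto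
    then show "c i * ha n p R S i j = (if i = j then - delta n S j * c j else 0) +
        (if i = csucc n j then - int p * delta n R j * c (csucc n j) else 0)"
      using i j by (cases "i = csucc n j") (auto simp: ha_apply algebra_simps)
  qed
  then show ?thesis using j by simp
qed

lemma ha_comb_scale: "ha_comb n p R S (\<lambda>i. m * c i) = (\<lambda>j. m * ha_comb n p R S c j)"
  by (simp add: ha_comb_def sum_distrib_left algebra_simps)

lemma F_ha_comb:
  "F n p d T (ha_comb n p R S c) = (\<Sum>i\<in>En n. c i * F n p d T (ha n p R S i))"
  unfolding F_def ha_comb_def
  by (simp add: sum_distrib_left sum.swap[of _ "En n"] algebra_simps)

lemma ha_comb_in_hom_cone_iff:
  "ha_comb n p R S c \<in> hom_cone n p S T \<longleftrightarrow>
     (\<forall>d\<in>S. (\<Sum>k\<in>En n. c k * F n p d T (ha n p R S k)) \<le> 0)"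
  by (simp add: hom_cone_def ha_comb_in_zvec F_ha_comb)

end

lemma pHa_monoid_eq: "pHa_monoid n p R S = {ha_comb n p R S c | c. \<forall>i\<in>S. 0 \<le> c i}"
  by (auto simp: pHa_monoid_def ha_comb_def)

lemma zvec_scale_iff: "m \<noteq> 0 \<Longrightarrow> (\<lambda>j. m * x j) \<in> zvec n \<longleftrightarrow> x \<in> zvec n"
  by (simp add: zvec_def)

lemma F_scale: "F n p d T (\<lambda>j. m * x j) = m * F n p d T x"
  unfolding F_def by (simp add: sum_distrib_left algebra_simps)

lemma hom_cone_scale_iff:
  fixes m :: int
  assumes "0 < m"
  shows "(\<lambda>j. m * x j) \<in> hom_cone n p S T \<longleftrightarrow> x \<in> hom_cone n p S T"
  using assms by (simp add: hom_cone_def zvec_scale_iff F_scale mult_le_0_iff)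

lemma saturation_scale_iff:
  assumes closed: "\<And>x k. x \<in> A \<Longrightarrow> (\<lambda>j. int k * x j) \<in> A" and "1 \<le> m"
  shows "(\<lambda>j. int m * x j) \<in> saturation n A \<longleftrightarrow> x \<in> saturation n A"
proof
  assume "(\<lambda>j. int m * x j) \<in> saturation n A"
  then obtain k :: nat where "1 \<le> k" "(\<lambda>j. int k * (int m * x j)) \<in> A" "x \<in> zvec n"
    using \<open>1 \<le> m\<close> by (auto simp: saturation_def zvec_scale_iff)
  moreover have "1 \<le> k * m" using \<open>1 \<le> k\<close> \<open>1 \<le> m\<close> by simp
  ultimately show "x \<in> saturation n A"
    unfolding saturation_def by (auto intro!: exI[of _ "k * m"] simp: mult.assoc)
next
  assume "x \<in> saturation n A"
  then obtain k :: nat where "1 \<le> k" "(\<lambda>j. int k * x j) \<in> A" "x \<in> zvec n"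
    by (auto simp: saturation_def)
  then have "(\<lambda>j. int k * (int m * x j)) \<in> A"
    using closed[of "\<lambda>j. int k * x j" m] by (simp add: algebra_simps)
  then show "(\<lambda>j. int m * x j) \<in> saturation n A"
    using \<open>1 \<le> k\<close> \<open>x \<in> zvec n\<close> \<open>1 \<le> m\<close> by (auto simp: saturation_def zvec_scale_iff)
qed

lemma C_pHa_scale_iff:
  assumes "1 \<le> m"
  shows "(\<lambda>j. int m * x j) \<in> C_pHa n p R S \<longleftrightarrow> x \<in> C_pHa n p R S"
  unfolding C_pHa_def
proof (rule saturation_scale_iff[OF _ assms])
  fix x :: "nat \<Rightarrow> int" and k :: nat
  assume "x \<in> pHa_monoid n p R S"
  then obtain c where "\<forall>i\<in>S. 0 \<le> c i" "x = (\<lambda>j. \<Sum>i\<in>En n. c i * ha n p R S i j)"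
    by (auto simp: pHa_monoid_def)
  then show "(\<lambda>j. int k * x j) \<in> pHa_monoid n p R S"
    unfolding pHa_monoid_def
    by (auto intro!: exI[of _ "\<lambda>i. int k * c i"] simp: sum_distrib_left algebra_simps)
qed

text \<open>Solving \<open>ha_comb c = m x\<close> coordinate by coordinate from \<open>j = n\<close> downwards, starting from a
  guess \<open>a\<close> for \<open>c (n + 1) = c 1\<close>: \<open>back_solve n p R S x m a t\<close> is the resulting value of
  \<open>c (n + 1 - t)\<close>.\<close>

fun back_solve ::
  "nat \<Rightarrow> nat \<Rightarrow> nat set \<Rightarrow> nat set \<Rightarrow> (nat \<Rightarrow> int) \<Rightarrow> int \<Rightarrow> int \<Rightarrow> nat \<Rightarrow> int" where
  "back_solve n p R S x m a 0 = a"
| "back_solve n p R S x m a (Suc t) =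
     - delta n S (n - t) * (m * x (n - t) + int p * delta n R (n - t) * back_solve n p R S x m a t)"

lemma back_solve_linear:
  "back_solve n p R S x m a t = m * back_solve n p R S x 1 0 t + a * back_solve n p R S x 0 1 t"
  by (induction t) (simp_all add: algebra_simps)

lemma abs_back_solve_0_1: "\<bar>back_solve n p R S x 0 1 t\<bar> = int p ^ t"
  by (induction t) (simp_all add: abs_mult delta_def)

locale ha_basis = cyclic +
  fixes p :: nat
  assumes two_le_p: "2 \<le> p"
begin

lemma two_le_p_power: "2 \<le> int p ^ n"
proof -
  have "p ^ 1 \<le> p ^ n" using two_le_p n_pos by (intro power_increasing) auto
  then have "int 2 \<le> int (p ^ n)" using two_le_p by (simp only: of_nat_le_iff) simp
  then show ?thesis by simp
qed

lemma ha_comb_injective: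
  assumes eq: "\<forall>j\<in>En n. ha_comb n p R S a j = ha_comb n p R S b j" and j: "j \<in> En n"
  shows "a j = b j"
proof -
  define c where "c i = a i - b i" for i
  have abs_step: "\<bar>c j\<bar> = int p * \<bar>c (csucc n j)\<bar>" if "j \<in> En n" for j
  proof -
    have "delta n S j * c j = - (int p * delta n R j * c (csucc n j))"
      using eq that by (simp add: ha_comb_apply c_def algebra_simps)
    then have "\<bar>delta n S j * c j\<bar> = \<bar>int p * delta n R j * c (csucc n j)\<bar>" by simp
    then show ?thesis by (simp add: abs_mult)
  qed
  define M where "M = Max ((\<lambda>j. \<bar>c j\<bar>) ` En n)"
  have le_M: "\<bar>c j\<bar> \<le> M" if "j \<in> En n" for j
    unfolding M_def using that by simp
  have "En n \<noteq> {}" using n_pos by (auto simp: En_def)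
  then have "M \<in> (\<lambda>j. \<bar>c j\<bar>) ` En n" unfolding M_def by (intro Max_in) auto
  then obtain j0 where j0: "j0 \<in> En n" "\<bar>c j0\<bar> = M" by auto
  have "int p * M \<le> M"
    using le_M[of "cpred n j0"] abs_step[of "cpred n j0"] j0 by simp
  moreover have "0 \<le> M" using j0 by auto
  moreover have "2 * M \<le> int p * M" using two_le_p \<open>0 \<le> M\<close> by (intro mult_right_mono) auto
  ultimately have "M = 0" by linarith
  then show ?thesis using le_M[OF j] by (simp add: c_def)
qed

lemma ha_comb_multiple:
  assumes x: "x \<in> zvec n"
  obtains m :: nat and c where "1 \<le> m" "ha_comb n p R S c = (\<lambda>j. int m * x j)"
proof -
  define \<alpha> where "\<alpha> = back_solve n p R S x 1 0 n"
  define \<beta> where "\<beta> = back_solve n p R S x 0 1 n"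
  have "1 - \<beta> \<noteq> 0"
    using two_le_p_power abs_back_solve_0_1[of n p R S x n] by (auto simp: \<beta>_def)
  define m where "m = (1 - \<beta>)\<^sup>2"
  define a where "a = \<alpha> * (1 - \<beta>)"
  have "0 < m" using \<open>1 - \<beta> \<noteq> 0\<close> by (simp add: m_def)
  then have "1 \<le> m" by simp
  have wrap: "back_solve n p R S x m a n = a"
    using back_solve_linear[of n p R S x m a n]
    by (simp add: \<alpha>_def[symmetric] \<beta>_def[symmetric] m_def a_def power2_eq_square algebra_simps)
  define c where "c j = back_solve n p R S x m a (n + 1 - j)" for j
  have "ha_comb n p R S c j = m * x j" for j
  proof (cases "j \<in> En n")
    case False
    then show ?thesis using x ha_comb_in_zvec by (auto simp: zvec_def)
  next
    case True
    then have j: "1 \<le> j" "j \<le> n" by (auto simp: En_def)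
    have cj: "c j = - delta n S j * (m * x j + int p * delta n R j * back_solve n p R S x m a (n - j))"
      using j by (simp add: c_def Suc_diff_le)
    have "c (csucc n j) = back_solve n p R S x m a (n - j)"
    proof (cases "j < n")
      case True
      then have "csucc n j = j + 1" unfolding csucc_def by (intro cidx_eqI) (auto simp: En_def)
      then show ?thesis using True by (simp add: c_def)
    next
      case False
      then have "j = n" using j by simp
      moreover have "(1 + n) mod n = 1 mod n" by (rule mod_add_self2)
      then have "csucc n n = 1"
        unfolding csucc_def using n_pos by (intro cidx_eqI) (auto simp: En_def)
      ultimately show ?thesis using wrap by (simp add: c_def)
    qed
    moreover have "- delta n S j * c j =
        m * x j + int p * delta n R j * back_solve n p R S x m a (n - j)"
      unfolding cj by (simp add: mult.assoc[symmetric])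
    ultimately show ?thesis using True by (simp add: ha_comb_apply)
  qed
  then have "ha_comb n p R S c = (\<lambda>j. int (nat m) * x j)" using \<open>1 \<le> m\<close> by auto
  moreover have "1 \<le> nat m" using \<open>1 \<le> m\<close> by simp
  ultimately show ?thesis using that by blast
qed

lemma ha_comb_in_C_pHa_iff:
  assumes "S \<subseteq> En n"
  shows "ha_comb n p R S c \<in> C_pHa n p R S \<longleftrightarrow> (\<forall>i\<in>S. 0 \<le> c i)"
proof
  assume "ha_comb n p R S c \<in> C_pHa n p R S"
  then obtain k :: nat and c' where "1 \<le> k" and c'_nonneg: "\<forall>i\<in>S. 0 \<le> c' i"
    and "(\<lambda>j. int k * ha_comb n p R S c j) = ha_comb n p R S c'"
    by (auto simp: C_pHa_def saturation_def pHa_monoid_eq)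
  then have "\<forall>j\<in>En n. ha_comb n p R S (\<lambda>i. int k * c i) j = ha_comb n p R S c' j"
    by (simp add: ha_comb_scale)
  then have "int k * c i = c' i" if "i \<in> S" for i
    using ha_comb_injective assms that by blast
  then have "0 \<le> int k * c i" if "i \<in> S" for i
    using c'_nonneg that by simp
  then show "\<forall>i\<in>S. 0 \<le> c i"
    using \<open>1 \<le> k\<close> by (simp add: zero_le_mult_iff)
next
  assume "\<forall>i\<in>S. 0 \<le> c i"
  then show "ha_comb n p R S c \<in> C_pHa n p R S"
    by (auto simp: C_pHa_def saturation_def pHa_monoid_eq ha_comb_in_zvec intro!: exI[of _ 1])
qed

lemma hom_cone_eq_C_pHa_iff:
  "hom_cone n p S T = C_pHa n p R S \<longleftrightarrow>
     (\<forall>c. ha_comb n p R S c \<in> hom_cone n p S T \<longleftrightarrow> ha_comb n p R S c \<in> C_pHa n p R S)"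
proof
  assume on_ha_comb: "\<forall>c. ha_comb n p R S c \<in> hom_cone n p S T \<longleftrightarrow> ha_comb n p R S c \<in> C_pHa n p R S"
  show "hom_cone n p S T = C_pHa n p R S"
  proof (rule set_eqI)
    fix x
    show "x \<in> hom_cone n p S T \<longleftrightarrow> x \<in> C_pHa n p R S"
    proof (cases "x \<in> zvec n")
      case False
      then show ?thesis by (simp add: hom_cone_def C_pHa_def saturation_def)
    next
      case True
      then obtain m :: nat and c where "1 \<le> m" and c: "ha_comb n p R S c = (\<lambda>j. int m * x j)"
        using ha_comb_multiple by blast
      then show ?thesis
        using on_ha_comb[rule_format, of c] hom_cone_scale_iff[of "int m" x] C_pHa_scale_iff[of m x]
        by simp
    qed
  qed
qed simp

lemma F_ha_off_diagonal_eq_0_iff: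
  assumes "d \<in> En n" and "k \<in> En n" and "k \<noteq> d"
  shows "F n p d T (ha n p R S k) = 0 \<longleftrightarrow>
     delta n S k * delta n T k * delta n T (cpred n k) * delta n R (cpred n k) = -1"
  using two_le_p F_ha_off_diagonal[OF assms, of p T R S]
    delta_cases[of S k] delta_cases[of T k] delta_cases[of T "cpred n k"] delta_cases[of R "cpred n k"]
  by auto

lemma F_ha_diagonal_neg_iff:
  assumes "d \<in> En n"
  shows "F n p d T (ha n p R S d) < 0 \<longleftrightarrow> delta n T (cpred n d) = delta n R (cpred n d)"
  using two_le_p_power F_ha_diagonal[OF assms, of p T R S]
    delta_cases[of S d] delta_cases[of T d] delta_cases[of T "cpred n d"] delta_cases[of R "cpred n d"]
  by auto

lemma F_ha_diagonal_nonzero: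
  assumes "d \<in> En n"
  shows "F n p d T (ha n p R S d) \<noteq> 0"
  using two_le_p_power F_ha_diagonal[OF assms, of p T R S]
    delta_cases[of S d] delta_cases[of T d] delta_cases[of T "cpred n d"] delta_cases[of R "cpred n d"]
  by auto

end

section \<open>When \<open>C_pHa\<close> is a homogeneous cone\<close>

text \<open>For \<open>|S| \<ge> 2\<close> this is the sign pattern making the rows \<open>d \<in> S\<close> of the matrix
  \<open>F n p d T (ha n p R S k)\<close> diagonal with negative diagonal.\<close>

definition homogeneity_cond :: "nat \<Rightarrow> nat set \<Rightarrow> nat set \<Rightarrow> nat set \<Rightarrow> bool" where
  "homogeneity_cond n R S T \<longleftrightarrow>
     (\<forall>i\<in>En n. delta n S i * delta n T i * delta n T (cpred n i) * delta n R (cpred n i) = -1) \<and>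
     (\<forall>d\<in>S. delta n T (cpred n d) = delta n R (cpred n d))"

locale marked_cycle = cyclic +
  fixes S :: "nat set"
  assumes S_sub: "S \<subseteq> En n" and S_nonempty: "S \<noteq> {}"

locale pHa_setting = ha_basis n p + marked_cycle n S for n p S +
  assumes two_le_card_S: "2 \<le> card S"
begin

lemma exists_other_in_S: "\<exists>d\<in>S. d \<noteq> i"
proof (rule ccontr)
  assume "\<not> (\<exists>d\<in>S. d \<noteq> i)"
  then have "S \<subseteq> {i}" by auto
  then have "card S \<le> 1" using card_mono[of "{i}" S] by simp
  then show False using two_le_card_S by simp
qed

lemma F_ha_off_diagonal_vanish_iff:
  "(\<forall>d\<in>S. \<forall>k\<in>En n. k \<noteq> d \<longrightarrow> F n p d T (ha n p R S k) = 0) \<longleftrightarrow>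
     (\<forall>k\<in>En n. delta n S k * delta n T k * delta n T (cpred n k) * delta n R (cpred n k) = -1)"
proof
  assume off_diagonal: "\<forall>d\<in>S. \<forall>k\<in>En n. k \<noteq> d \<longrightarrow> F n p d T (ha n p R S k) = 0"
  show "\<forall>k\<in>En n. delta n S k * delta n T k * delta n T (cpred n k) * delta n R (cpred n k) = -1"
  proof
    fix k assume "k \<in> En n"
    obtain d where "d \<in> S" "d \<noteq> k" using exists_other_in_S by blast
    then show "delta n S k * delta n T k * delta n T (cpred n k) * delta n R (cpred n k) = -1"
      using off_diagonal \<open>k \<in> En n\<close> S_sub F_ha_off_diagonal_eq_0_iff[of d k T R S] by auto
  qed
qed (use S_sub F_ha_off_diagonal_eq_0_iff in auto)

lemma hom_cone_eq_C_pHa_iff_homogeneity_cond: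
  "hom_cone n p S T = C_pHa n p R S \<longleftrightarrow> homogeneity_cond n R S T"
proof -
  let ?W = "\<lambda>d k. F n p d T (ha n p R S k)"
  have "hom_cone n p S T = C_pHa n p R S \<longleftrightarrow>
      (\<forall>c. (\<forall>d\<in>S. (\<Sum>k\<in>En n. c k * ?W d k) \<le> 0) \<longleftrightarrow> (\<forall>k\<in>S. 0 \<le> c k))"
    by (simp add: hom_cone_eq_C_pHa_iff ha_comb_in_hom_cone_iff ha_comb_in_C_pHa_iff S_sub)
  also have "\<dots> \<longleftrightarrow> (\<forall>d\<in>S. ?W d d < 0 \<and> (\<forall>k\<in>En n. k \<noteq> d \<longrightarrow> ?W d k = 0))"
    by (rule orthant_cone_iff_negative_diagonal[OF finite_En S_sub])
      (use S_sub F_ha_diagonal_nonzero in blast)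
  also have "\<dots> \<longleftrightarrow> homogeneity_cond n R S T"
  proof -
    have "(\<forall>d\<in>S. ?W d d < 0) \<longleftrightarrow> (\<forall>d\<in>S. delta n T (cpred n d) = delta n R (cpred n d))"
      using S_sub by (intro ball_cong[OF refl] F_ha_diagonal_neg_iff) blast
    then show ?thesis
      unfolding homogeneity_cond_def F_ha_off_diagonal_vanish_iff[symmetric] by blast
  qed
  finally show ?thesis .
qed

end

section \<open>Solving for \<open>T\<close> along the chains\<close>

text \<open>The vertices \<open>(csucc n ^^ k) i\<close> with \<open>k \<le> dist_to_mark n S i\<close> run from \<open>i\<close> to the last one
  before the next element of \<open>S\<close>; for \<open>i \<in> S\<close> they form the component of \<open>i\<close> in the chain
  diagram.\<close>

definition dist_to_mark :: "nat \<Rightarrow> nat set \<Rightarrow> nat \<Rightarrow> nat" where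
  "dist_to_mark n S i = (LEAST m. (csucc n ^^ Suc m) i \<in> S)"

definition chain_sign :: "nat \<Rightarrow> nat set \<Rightarrow> nat set \<Rightarrow> nat \<Rightarrow> int" where
  "chain_sign n R S i = (\<Prod>k\<le>dist_to_mark n S i. - delta n R ((csucc n ^^ k) i))"

definition canonical_T :: "nat \<Rightarrow> nat set \<Rightarrow> nat set \<Rightarrow> nat set" where
  "canonical_T n R S = {i \<in> En n. chain_sign n R S i = 1}"

context marked_cycle
begin

lemma dist_to_mark_exists: "i \<in> En n \<Longrightarrow> \<exists>m<n. (csucc n ^^ Suc m) i \<in> S"
  using S_nonempty S_sub funpow_csucc_reaches by (metis equals0I subsetD)

lemma funpow_Suc_dist_to_mark_in_S: "i \<in> En n \<Longrightarrow> (csucc n ^^ Suc (dist_to_mark n S i)) i \<in> S"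
  unfolding dist_to_mark_def using dist_to_mark_exists by (metis (mono_tags, lifting) LeastI_ex)

lemma dist_to_mark_lt: "i \<in> En n \<Longrightarrow> dist_to_mark n S i < n"
  unfolding dist_to_mark_def using dist_to_mark_exists by (meson Least_le le_less_trans)

lemma funpow_Suc_notin_S: "k < dist_to_mark n S i \<Longrightarrow> (csucc n ^^ Suc k) i \<notin> S"
  unfolding dist_to_mark_def by (rule not_less_Least)

lemma dist_to_mark_eq_0: "csucc n i \<in> S \<Longrightarrow> dist_to_mark n S i = 0"
  unfolding dist_to_mark_def by simp

lemma dist_to_mark_csucc:
  assumes i: "i \<in> En n" and "csucc n i \<notin> S"
  shows "dist_to_mark n S i = Suc (dist_to_mark n S (csucc n i))"
proof -
  have "dist_to_mark n S i = Suc (LEAST m. (csucc n ^^ Suc (Suc m)) i \<in> S)"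
    unfolding dist_to_mark_def
    by (rule Least_Suc[of _ "dist_to_mark n S i"])
      (use funpow_Suc_dist_to_mark_in_S[OF i] assms in \<open>auto simp: dist_to_mark_def\<close>)
  then show ?thesis by (simp add: dist_to_mark_def funpow_Suc_right del: funpow.simps)
qed

lemma chain_sign_last: "csucc n i \<in> S \<Longrightarrow> chain_sign n R S i = - delta n R i"
  by (simp add: chain_sign_def dist_to_mark_eq_0)

lemma chain_sign_step:
  assumes "i \<in> En n" and "csucc n i \<notin> S"
  shows "chain_sign n R S i = - delta n R i * chain_sign n R S (csucc n i)"
  unfolding chain_sign_def dist_to_mark_csucc[OF assms] prod.atMost_Suc_shift
  by (simp add: funpow_Suc_right del: funpow.simps)

lemma chain_sign_cases: "chain_sign n R S i = 1 \<or> chain_sign n R S i = -1"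
proof -
  have "\<bar>chain_sign n R S i\<bar> = 1" by (simp add: chain_sign_def abs_prod)
  then show ?thesis by auto
qed

lemma canonical_T_subset: "canonical_T n R S \<subseteq> En n"
  by (auto simp: canonical_T_def)

lemma delta_canonical_T: "i \<in> En n \<Longrightarrow> delta n (canonical_T n R S) i = - chain_sign n R S i"
  using chain_sign_cases[of R i] by (auto simp: delta_En canonical_T_def)

lemma Tprime_cond_iff_delta:
  "Tprime_cond n R S T \<longleftrightarrow> T \<subseteq> En n \<and>
     (\<forall>i\<in>En n. csucc n i \<notin> S \<longrightarrow> delta n T i = - delta n R i * delta n T (csucc n i)) \<and>
     (\<forall>s\<in>S. delta n T (cpred n s) = delta n R (cpred n s))"
  by (auto simp: Tprime_cond_def delta_En)

lemma Tprime_cond_delta_eq: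
  assumes "Tprime_cond n R S T" and "i \<in> En n"
  shows "delta n T i = - chain_sign n R S i"
  using assms(2)
proof (induction "dist_to_mark n S i" arbitrary: i rule: less_induct)
  case less
  show ?case
  proof (cases "csucc n i \<in> S")
    case True
    then show ?thesis
      using assms(1) less.prems cpred_csucc[of i] chain_sign_last[of i R]
      by (auto simp: Tprime_cond_iff_delta simp del: cpred_csucc)
  next
    case False
    then show ?thesis
      using assms(1) less less.hyps[of "csucc n i"] dist_to_mark_csucc[OF less.prems False]
        chain_sign_step[OF less.prems False]
      by (simp add: Tprime_cond_iff_delta)
  qed
qed

lemma Tprime_cond_iff: "Tprime_cond n R S T \<longleftrightarrow> T = canonical_T n R S"
proof
  assume cond: "Tprime_cond n R S T"
  have "T \<subseteq> En n" using cond by (simp add: Tprime_cond_def)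
  moreover have "i \<in> T \<longleftrightarrow> i \<in> canonical_T n R S" if "i \<in> En n" for i
    using Tprime_cond_delta_eq[OF cond that] chain_sign_cases[of R i] that
    by (auto simp: delta_En canonical_T_def split: if_splits)
  ultimately show "T = canonical_T n R S" by (auto simp: canonical_T_def)
next
  assume "T = canonical_T n R S"
  then show "Tprime_cond n R S T"
    using S_sub canonical_T_subset by (auto simp: Tprime_cond_iff_delta delta_canonical_T chain_sign_step chain_sign_last)
qed

lemma Tprime_eq_canonical_T: "Tprime n R S = canonical_T n R S"
  unfolding Tprime_def by (rule the_equality) (simp_all add: Tprime_cond_iff)

lemma homogeneity_cond_iff_Tprime_cond:
  assumes "T \<subseteq> En n"
  shows "homogeneity_cond n R S T \<longleftrightarrow> Tprime_cond n R S T \<and> S \<inter> T = {}"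
proof
  assume hc: "homogeneity_cond n R S T"
  have step: "delta n T i = - delta n R i * delta n T (csucc n i)"
    if "i \<in> En n" "csucc n i \<notin> S" for i
  proof -
    have "delta n S (csucc n i) * delta n T (csucc n i) * delta n T i * delta n R i = -1"
      using hc that by (auto simp: homogeneity_cond_def dest!: bspec[of _ _ "csucc n i"])
    then show ?thesis using that by (auto simp: delta_En split: if_splits)
  qed
  have "s \<notin> T" if "s \<in> S" for s
  proof -
    have "s \<in> En n" using that S_sub by auto
    then have "delta n S s * delta n T s * delta n T (cpred n s) * delta n R (cpred n s) = -1"
      "delta n T (cpred n s) = delta n R (cpred n s)"
      using hc that by (auto simp: homogeneity_cond_def)
    then show ?thesis using \<open>s \<in> En n\<close> that by (auto simp: delta_En split: if_splits)
  qed
  then show "Tprime_cond n R S T \<and> S \<inter> T = {}"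
    using assms step hc by (auto simp: Tprime_cond_iff_delta homogeneity_cond_def)
next
  assume "Tprime_cond n R S T \<and> S \<inter> T = {}"
  then have rec: "\<forall>i\<in>En n. csucc n i \<notin> S \<longrightarrow> delta n T i = - delta n R i * delta n T (csucc n i)"
    and marks: "\<forall>s\<in>S. delta n T (cpred n s) = delta n R (cpred n s)" and "S \<inter> T = {}"
    by (auto simp: Tprime_cond_iff_delta)
  have "delta n S i * delta n T i * delta n T (cpred n i) * delta n R (cpred n i) = -1"
    if i: "i \<in> En n" for i
  proof (cases "i \<in> S")
    case True
    then show ?thesis
      using i marks \<open>S \<inter> T = {}\<close> delta_cases[of R "cpred n i"] by (auto simp: delta_En)
  next
    case False
    then have "delta n T (cpred n i) = - delta n R (cpred n i) * delta n T i"
      using rec i by (metis cpred_in_En csucc_cpred)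
    then show ?thesis
      using i False delta_cases[of T i] delta_cases[of R "cpred n i"] by (auto simp: delta_En)
  qed
  then show "homogeneity_cond n R S T" using marks by (simp add: homogeneity_cond_def)
qed

lemma homogeneity_cond_iff:
  "T \<subseteq> En n \<Longrightarrow>
     homogeneity_cond n R S T \<longleftrightarrow> T = canonical_T n R S \<and> S \<inter> canonical_T n R S = {}"
  by (auto simp: homogeneity_cond_iff_Tprime_cond Tprime_cond_iff)

lemma disjoint_canonical_T_iff: "S \<inter> canonical_T n R S = {} \<longleftrightarrow> (\<forall>s\<in>S. chain_sign n R S s = -1)"
  using S_sub chain_sign_cases[of R] by (auto simp: canonical_T_def)

abbreviation linked :: "(nat \<times> nat) set" where
  "linked \<equiv> (chain_edges n S \<union> (chain_edges n S)\<inverse>)\<^sup>*"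

lemma chain_edgeI: "i \<in> En n \<Longrightarrow> csucc n i \<notin> S \<Longrightarrow> (i, csucc n i) \<in> chain_edges n S"
  by (auto simp: chain_edges_def)

lemma linked_Image_mark:
  assumes s: "s \<in> S"
  shows "linked `` {s} = (\<lambda>k. (csucc n ^^ k) s) ` {..dist_to_mark n S s}"
proof -
  have sE: "s \<in> En n" using s S_sub by auto
  have "(s, (csucc n ^^ k) s) \<in> linked" if "k \<le> dist_to_mark n S s" for k
    using that
  proof (induction k)
    case (Suc k)
    have "((csucc n ^^ k) s, csucc n ((csucc n ^^ k) s)) \<in> chain_edges n S"
      using funpow_Suc_notin_S[of k s] Suc.prems sE by (intro chain_edgeI) auto
    then show ?case using Suc by (auto intro: rtrancl_into_rtrancl)
  qed simp
  moreover have "y \<in> (\<lambda>k. (csucc n ^^ k) s) ` {..dist_to_mark n S s}" if "(s, y) \<in> linked" for y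
    using that
  proof (induction rule: rtrancl_induct)
    case base
    then show ?case by (auto intro: image_eqI[of _ _ 0])
  next
    case (step y z)
    then obtain k where k: "k \<le> dist_to_mark n S s" "y = (csucc n ^^ k) s" by auto
    from step(2) show ?case
    proof
      assume "(y, z) \<in> chain_edges n S"
      then have z: "z = csucc n y" "z \<notin> S" by (auto simp: chain_edges_def)
      then have "k \<noteq> dist_to_mark n S s" using k funpow_Suc_dist_to_mark_in_S[OF sE] by auto
      then show ?thesis using z k by (auto intro!: image_eqI[of _ _ "Suc k"])
    next
      assume "(y, z) \<in> (chain_edges n S)\<inverse>"
      then have z: "y = csucc n z" "y \<notin> S" "z \<in> En n" by (auto simp: chain_edges_def)
      then obtain k' where k': "k = Suc k'" using k s by (cases k) auto
      then have "csucc n z = csucc n ((csucc n ^^ k') s)" using k z by simp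
      then have "z = (csucc n ^^ k') s" using z(3) sE by (metis cpred_csucc funpow_csucc_in_En)
      then show ?thesis using k k' by auto
    qed
  qed
  ultimately show ?thesis by blast
qed

lemma linked_from_mark:
  assumes i: "i \<in> En n"
  obtains s where "s \<in> S" and "(s, i) \<in> linked"
proof -
  obtain s0 where s0: "s0 \<in> S" using S_nonempty by blast
  have "\<exists>s\<in>S. (s, (csucc n ^^ b) s0) \<in> linked" for b
  proof (induction b)
    case 0
    show ?case using s0 by auto
  next
    case (Suc b)
    then obtain s where s: "s \<in> S" "(s, (csucc n ^^ b) s0) \<in> linked" by blast
    show ?case
    proof (cases "(csucc n ^^ Suc b) s0 \<in> S")
      case True
      then show ?thesis by auto
    next
      case False
      then have "((csucc n ^^ b) s0, (csucc n ^^ Suc b) s0) \<in> chain_edges n S"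
        using s0 S_sub chain_edgeI[of "(csucc n ^^ b) s0"] by auto
      then show ?thesis using s by (auto intro: rtrancl_into_rtrancl)
    qed
  qed
  moreover obtain b where "(csucc n ^^ Suc b) s0 = i"
    using funpow_csucc_reaches[OF _ i] s0 S_sub by blast
  ultimately show ?thesis using that by metis
qed

lemma chain_components_eq: "chain_components n S = (\<lambda>s. linked `` {s}) ` S"
proof -
  have "sym linked" by (intro sym_rtrancl) (auto simp: sym_def)
  then have class_eq: "linked `` {i} = linked `` {s}" if "(s, i) \<in> linked" for s i
    using that by (auto dest: symD intro: rtrancl_trans)
  show ?thesis
    unfolding chain_components_def
  proof (intro set_eqI iffI)
    fix C assume "C \<in> (\<lambda>i. linked `` {i}) ` En n"
    then obtain i where "i \<in> En n" "C = linked `` {i}" by blast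
    moreover obtain s where "s \<in> S" "(s, i) \<in> linked" using linked_from_mark \<open>i \<in> En n\<close> by blast
    ultimately show "C \<in> (\<lambda>s. linked `` {s}) ` S" using class_eq by blast
  qed (use S_sub in blast)
qed

lemma inj_on_funpow_csucc:
  assumes s: "s \<in> En n"
  shows "inj_on (\<lambda>k. (csucc n ^^ k) s) {..<n}"
proof
  fix k1 k2 assume k: "k1 \<in> {..<n}" "k2 \<in> {..<n}" and "(csucc n ^^ k1) s = (csucc n ^^ k2) s"
  then have "(s + k1) mod n = (s + k2) mod n" by (simp add: funpow_csucc[OF s] cidx_eq_iff)
  then have "k1 mod n = k2 mod n" using cong_add_lcancel_nat[of s k1 k2 n] by (simp add: cong_def)
  then show "k1 = k2" using k by simp
qed

lemma prod_linked_Image_mark: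
  assumes s: "s \<in> S"
  shows "(\<Prod>j\<in>linked `` {s}. - delta n R j) = chain_sign n R S s"
proof -
  have "dist_to_mark n S s < n" using dist_to_mark_lt s S_sub by blast
  then have "{..dist_to_mark n S s} \<subseteq> {..<n}" by auto
  then have "inj_on (\<lambda>k. (csucc n ^^ k) s) {..dist_to_mark n S s}"
    using inj_on_funpow_csucc s S_sub by (meson inj_on_subset subsetD)
  then show ?thesis unfolding linked_Image_mark[OF s] chain_sign_def by (simp add: prod.reindex)
qed

lemma prod_neg_delta_eq_neg1_iff:
  assumes "finite X" and "X \<subseteq> En n"
  shows "(\<Prod>j\<in>X. - delta n R j) = -1 \<longleftrightarrow> even (card (X \<inter> R)) \<noteq> even (card X)"
proof -
  have "(\<Prod>j\<in>X. - delta n R j) = (\<Prod>j\<in>X. if j \<in> R then 1 else -1)"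
    using assms by (intro prod.cong) (auto simp: delta_En)
  also have "\<dots> = (-1) ^ card (X - R)"
    using assms by (simp add: prod.If_cases Diff_eq)
  finally have "(\<Prod>j\<in>X. - delta n R j) = (-1) ^ card (X - R)" .
  moreover have "card X = card (X \<inter> R) + card (X - R)" using assms by (simp add: card_Int_Diff)
  moreover have "(-1::int) ^ m = -1 \<longleftrightarrow> odd m" for m by (cases "even m") simp_all
  ultimately show ?thesis by auto
qed

lemma chain_components_parity_iff:
  "(\<forall>C\<in>chain_components n S. even (card (C \<inter> R)) \<noteq> even (card C)) \<longleftrightarrow>
     (\<forall>s\<in>S. chain_sign n R S s = -1)"
proof -
  have "even (card (linked `` {s} \<inter> R)) \<noteq> even (card (linked `` {s})) \<longleftrightarrow>
      chain_sign n R S s = -1" if "s \<in> S" for s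
  proof -
    have "finite (linked `` {s})" "linked `` {s} \<subseteq> En n"
      using linked_Image_mark[OF that] that S_sub by auto
    then show ?thesis
      using prod_neg_delta_eq_neg1_iff[of "linked `` {s}" R] prod_linked_Image_mark[OF that, of R]
      by simp
  qed
  then show ?thesis unfolding chain_components_eq by blast
qed

end

context pHa_setting
begin

lemma C_pHa_eq_hom_cone_iff:
  assumes "T \<subseteq> En n"
  shows "C_pHa n p R S = hom_cone n p S T \<longleftrightarrow>
    T = canonical_T n R S \<and> S \<inter> canonical_T n R S = {}"
proof -
  have "C_pHa n p R S = hom_cone n p S T \<longleftrightarrow> hom_cone n p S T = C_pHa n p R S" by auto
  also have "\<dots> \<longleftrightarrow> homogeneity_cond n R S T" by (rule hom_cone_eq_C_pHa_iff_homogeneity_cond)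
  also have "\<dots> \<longleftrightarrow> T = canonical_T n R S \<and> S \<inter> canonical_T n R S = {}"
    by (rule homogeneity_cond_iff[OF assms])
  finally show ?thesis .
qed

lemma C_RS_eq_C_pHa_iff: "C_RS n p R S = C_pHa n p R S \<longleftrightarrow> S \<inter> canonical_T n R S = {}"
  using C_pHa_eq_hom_cone_iff[of "canonical_T n R S" R] canonical_T_subset
  unfolding C_RS_def Tprime_eq_canonical_T by auto

lemma C_pHa_homogeneous_iff:
  "(\<exists>T. T \<subseteq> En n \<and> C_pHa n p R S = hom_cone n p S T) \<longleftrightarrow> S \<inter> canonical_T n R S = {}"
proof
  assume "\<exists>T. T \<subseteq> En n \<and> C_pHa n p R S = hom_cone n p S T"
  then obtain T where "T \<subseteq> En n" "C_pHa n p R S = hom_cone n p S T" by blast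
  then show "S \<inter> canonical_T n R S = {}" using C_pHa_eq_hom_cone_iff by simp
next
  assume "S \<inter> canonical_T n R S = {}"
  then show "\<exists>T. T \<subseteq> En n \<and> C_pHa n p R S = hom_cone n p S T"
    using C_pHa_eq_hom_cone_iff[of "canonical_T n R S" R] canonical_T_subset
    by (intro exI[of _ "canonical_T n R S"]) simp
qed

end

theorem mainTheorem7:
  fixes n p :: nat and R S :: "nat set"
  assumes "n \<ge> 1" and "prime p" and "R \<subseteq> En n" and "S \<subseteq> En n" and "card S \<ge> 2"
  shows "(C_RS n p R S = C_pHa n p R S \<longleftrightarrow>
            (\<exists>T. T \<subseteq> En n \<and> C_pHa n p R S = hom_cone n p S T))
       \<and> ((\<exists>T. T \<subseteq> En n \<and> C_pHa n p R S = hom_cone n p S T) \<longleftrightarrow>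
            (\<forall>C\<in>chain_components n S. even (card (C \<inter> R)) \<noteq> even (card C)))"
proof -
  interpret pHa_setting n p S
    using assms prime_ge_2_nat[OF assms(2)] by unfold_locales auto
  have "(\<forall>C\<in>chain_components n S. even (card (C \<inter> R)) \<noteq> even (card C)) \<longleftrightarrow>
      S \<inter> canonical_T n R S = {}"
    by (simp only: chain_components_parity_iff disjoint_canonical_T_iff)
  then show ?thesis by (simp only: C_RS_eq_C_pHa_iff C_pHa_homogeneous_iff)
qed

end
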